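(* Let $V$ be a finite set, $M$ a matching on $V$ and $A \subseteq V(M)$ with $A \cap m(A) = \emptyset$. Let $s \ge 0$ be an integer and let $H$ be a graph with vertex set contained in $V$ which is a vertex-disjoint union of non-trivial cliques having in total at least $2|M|+s$ vertices, and such that no edge of $H$ has both endpoints in $A \cup (V \setminus V(M))$. Then $H$ contains a matching of size $s$ each of whose edges has one endpoint in $V(M)\setminus (A \cup m(A))$ and the other endpoint in $A \cup (V\setminus V(M))$.
   Context: For a matching $M$ and $A \subseteq V(M)$, $m(A)$ denotes the set of vertices matched in $M$ to the vertices of $A$. A non-trivial clique is a complete graph on at least $2$ vertices. *)

theory Defs
  imports Main
begin

text \<open>Graphs are represented by edge sets; an edge is a two-element vertex set.\<close>

definition is_edge :: "'a set \<Rightarrow> bool" where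
  "is_edge e \<longleftrightarrow> (\<exists>x y. x \<noteq> y \<and> e = {x, y})"

definition matching :: "'a set set \<Rightarrow> bool" where
  "matching M \<longleftrightarrow> (\<forall>e\<in>M. is_edge e) \<and> (\<forall>e\<in>M. \<forall>f\<in>M. e \<noteq> f \<longrightarrow> e \<inter> f = {})"

definition matching_on :: "'a set \<Rightarrow> 'a set set \<Rightarrow> bool" where
  "matching_on V M \<longleftrightarrow> matching M \<and> (\<forall>e\<in>M. e \<subseteq> V)"

definition matched_verts :: "'a set set \<Rightarrow> 'a set" where
  "matched_verts M = \<Union>M"

definition mate_set :: "'a set set \<Rightarrow> 'a set \<Rightarrow> 'a set" where
  "mate_set M A = {y. \<exists>x\<in>A. {x, y} \<in> M \<and> x \<noteq> y}"

definition union_of_nontrivial_cliques :: "'a set \<Rightarrow> 'a set set \<Rightarrow> bool" where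
  "union_of_nontrivial_cliques W E \<longleftrightarrow>
     (\<exists>\<C>. (\<forall>C\<in>\<C>. finite C \<and> card C \<ge> 2) \<and>
          (\<forall>C\<in>\<C>. \<forall>D\<in>\<C>. C \<noteq> D \<longrightarrow> C \<inter> D = {}) \<and>
          \<Union>\<C> = W \<and>
          E = {{x, y} | x y. x \<noteq> y \<and> (\<exists>C\<in>\<C>. x \<in> C \<and> y \<in> C)})"

end

(* Let T = A \<union> (V - V(M)) and X = V(M) - (A \<union> m(A)), so that every vertex of V lies in T, in X
   or in m(A). Since no edge of H lies inside T, each clique of H contains at most one vertex of T;
   a clique containing a vertex of T but none of X has, being non-trivial, a further vertex in m(A).
   Counting clique by clique gives |W| \<le> g + |X| + 2 |m(A)|, where g is the number of cliques
   meeting both T and X, and |X| + 2 |m(A)| \<le> |X| + |m(A)| + |A| = |V(M)| \<le> 2 |M|.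
   Hence g \<ge> s, and one edge between X and T in each of s such cliques forms the matching. *)

theory Submission
  imports Defs
begin

lemma matching_disjoint:
  assumes "matching M" "e \<in> M" "f \<in> M" "e \<noteq> f"
  shows "e \<inter> f = {}"
  using assms unfolding matching_def by blast

lemma matching_unique_mate:
  assumes "matching M" "{x, y} \<in> M" "{x, z} \<in> M"
  shows "y = z"
proof -
  have "{x, y} = {x, z}"
  proof (rule ccontr)
    assume "{x, y} \<noteq> {x, z}"
    then have "{x, y} \<inter> {x, z} = {}"
      using matching_disjoint assms by blast
    then show False by simp
  qed
  then show ?thesis
    by (metis doubleton_eq_iff)
qed

lemma mate_set_subset_matched_verts: "mate_set M A \<subseteq> matched_verts M"
  unfolding mate_set_def matched_verts_def by blast

lemma card_mate_set_le:
  assumes "matching M" "finite A"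
  shows "card (mate_set M A) \<le> card A"
proof -
  have mates_le_1: "card {y. {x, y} \<in> M \<and> x \<noteq> y} \<le> 1" for x
  proof (cases "\<exists>y. {x, y} \<in> M")
    case True
    then obtain y where "{x, y} \<in> M" by blast
    then have "{y. {x, y} \<in> M \<and> x \<noteq> y} \<subseteq> {y}"
      using matching_unique_mate[OF assms(1)] by blast
    then show ?thesis
      using card_mono[of "{y}"] by fastforce
  qed simp
  have "mate_set M A = (\<Union>x\<in>A. {y. {x, y} \<in> M \<and> x \<noteq> y})"
    unfolding mate_set_def by blast
  then have "card (mate_set M A) \<le> (\<Sum>x\<in>A. card {y. {x, y} \<in> M \<and> x \<noteq> y})"
    using card_UN_le[OF assms(2)] by simp
  also have "\<dots> \<le> (\<Sum>x\<in>A. 1)"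
    using mates_le_1 by (intro sum_mono) auto
  finally show ?thesis by simp
qed

lemma card_matched_verts_le:
  assumes "matching M"
  shows "card (matched_verts M) \<le> 2 * card M"
proof -
  have "card (matched_verts M) \<le> sum card M"
    unfolding matched_verts_def by (rule card_Union_le_sum_card)
  also have "sum card M = sum (\<lambda>_. 2) M"
    using assms unfolding matching_def is_edge_def by (intro sum.cong) auto
  finally show ?thesis by simp
qed

lemma card_matched_verts_diff_plus_twice_mates_le:
  assumes "matching M" "finite (matched_verts M)"
    and "A \<subseteq> matched_verts M" "A \<inter> mate_set M A = {}"
  shows "card (matched_verts M - (A \<union> mate_set M A)) + 2 * card (mate_set M A) \<le> 2 * card M"
proof -
  let ?V = "matched_verts M" and ?Y = "mate_set M A"
  have fin: "finite (?V - (A \<union> ?Y))" "finite ?Y" "finite A"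
    using assms(2) finite_subset[OF mate_set_subset_matched_verts assms(2)]
      finite_subset[OF assms(3,2)] by auto
  have "?V = ((?V - (A \<union> ?Y)) \<union> ?Y) \<union> A"
    using assms(3) mate_set_subset_matched_verts[of M A] by blast
  also have "card \<dots> = card ((?V - (A \<union> ?Y)) \<union> ?Y) + card A"
    using fin assms(4) by (intro card_Un_disjoint) auto
  also have "card ((?V - (A \<union> ?Y)) \<union> ?Y) = card (?V - (A \<union> ?Y)) + card ?Y"
    using fin by (intro card_Un_disjoint) auto
  finally have "card ?V = card (?V - (A \<union> ?Y)) + card ?Y + card A" .
  moreover have "card ?Y \<le> card A"
    using card_mate_set_le assms finite_subset by blast
  ultimately show ?thesis
    using card_matched_verts_le[OF assms(1)] by linarith
qed

lemma card_clique_inter_independent_le_1: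
  assumes "finite C" "\<forall>a\<in>C. \<forall>b\<in>C. a \<noteq> b \<longrightarrow> {a, b} \<in> E" "\<forall>e\<in>E. \<not> e \<subseteq> T"
  shows "card (C \<inter> T) \<le> 1"
proof -
  have "a = b" if "a \<in> C \<inter> T" "b \<in> C \<inter> T" for a b
  proof (rule ccontr)
    assume "a \<noteq> b"
    then have "\<not> {a, b} \<subseteq> T"
      using assms(2,3) that by blast
    then show False
      using that by blast
  qed
  then show ?thesis
    using assms(1) by (simp add: card_le_Suc0_iff_eq)
qed

lemma card_inter_le_of_bool_plus_card_diff:
  assumes "finite C" "2 \<le> card C" "card (C \<inter> T) \<le> 1"
  shows "card (C \<inter> T) \<le> of_bool (C \<inter> T \<noteq> {} \<and> C \<inter> X \<noteq> {}) + card (C - (T \<union> X))"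
proof (cases "C \<inter> T \<noteq> {} \<and> C \<inter> X = {}")
  case True
  then obtain t where t: "t \<in> C \<inter> T"
    by blast
  then have "C \<inter> T = {t}"
    using assms(1,3) card_le_Suc0_iff_eq[of "C \<inter> T"] by auto
  then have "C - {t} \<subseteq> C - (T \<union> X)"
    using True by blast
  moreover have "card (C - {t}) \<ge> 1"
    using assms(2) t by (simp add: card_Diff_singleton_if)
  ultimately have "1 \<le> card (C - (T \<union> X))"
    using assms(1) card_mono[of "C - (T \<union> X)" "C - {t}"] by simp
  then show ?thesis
    using assms(3) by simp
qed (use assms(3) in auto)

lemma card_Union_le_parts_meeting_both:
  assumes "finite (\<Union>CC)" "\<forall>C\<in>CC. 2 \<le> card C" "pairwise disjnt CC"
    and "\<forall>C\<in>CC. card (C \<inter> T) \<le> 1"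
  shows "card (\<Union>CC) \<le> card {C\<in>CC. C \<inter> T \<noteq> {} \<and> C \<inter> X \<noteq> {}}
           + card (\<Union>CC \<inter> X) + 2 * card (\<Union>CC - (T \<union> X))"
proof -
  let ?R = "\<Union>CC - (T \<union> X)"
  have finCC: "finite CC" and fin: "\<forall>C\<in>CC. finite C"
    using assms(1) finite_UnionD by (auto intro: finite_subset)
  have card_UN_parts: "card (\<Union>C\<in>CC. f C) = (\<Sum>C\<in>CC. card (f C))"
    if "\<And>C. f C \<subseteq> C" for f :: "'a set \<Rightarrow> 'a set"
  proof (rule card_UN_disjoint[OF finCC])
    show "\<forall>C\<in>CC. finite (f C)"
      using fin that finite_subset by blast
    show "\<forall>C\<in>CC. \<forall>D\<in>CC. C \<noteq> D \<longrightarrow> f C \<inter> f D = {}"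
      using assms(3) that unfolding pairwise_def disjnt_def by blast
  qed
  have "\<Union>CC \<inter> T = (\<Union>C\<in>CC. C \<inter> T)"
    by blast
  then have "card (\<Union>CC \<inter> T) = (\<Sum>C\<in>CC. card (C \<inter> T))"
    using card_UN_parts[of "\<lambda>C. C \<inter> T"] by simp
  also have "\<dots> \<le> (\<Sum>C\<in>CC. of_bool (C \<inter> T \<noteq> {} \<and> C \<inter> X \<noteq> {}) + card (C - (T \<union> X)))"
    using assms(2,4) fin by (intro sum_mono card_inter_le_of_bool_plus_card_diff) auto
  also have "\<dots> = card {C\<in>CC. C \<inter> T \<noteq> {} \<and> C \<inter> X \<noteq> {}} + card ?R"
  proof -
    have "?R = (\<Union>C\<in>CC. C - (T \<union> X))"
      by blast
    then have "card ?R = (\<Sum>C\<in>CC. card (C - (T \<union> X)))"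
      using card_UN_parts[of "\<lambda>C. C - (T \<union> X)"] by simp
    moreover have "CC \<inter> {C. C \<inter> T \<noteq> {} \<and> C \<inter> X \<noteq> {}} = {C\<in>CC. C \<inter> T \<noteq> {} \<and> C \<inter> X \<noteq> {}}"
      by blast
    ultimately show ?thesis
      using finCC by (simp add: sum.distrib)
  qed
  finally have "card (\<Union>CC \<inter> T) \<le> card {C\<in>CC. C \<inter> T \<noteq> {} \<and> C \<inter> X \<noteq> {}} + card ?R" .
  moreover have "card (\<Union>CC) \<le> card (\<Union>CC \<inter> T) + card (\<Union>CC \<inter> X) + card ?R"
  proof -
    have "\<Union>CC = (\<Union>CC \<inter> T) \<union> (\<Union>CC \<inter> X) \<union> ?R"
      by blast
    then show ?thesis
      by (metis add_right_mono card_Un_le order_trans)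
  qed
  ultimately show ?thesis by linarith
qed

lemma card_Union_le_twice_card_matching_plus_meeting_both:
  fixes V :: "'a set" and M :: "'a set set" and A :: "'a set" and CC :: "'a set set"
  defines "T \<equiv> A \<union> (V - matched_verts M)" and "X \<equiv> matched_verts M - (A \<union> mate_set M A)"
  assumes "finite V" "matching_on V M" "A \<subseteq> matched_verts M" "A \<inter> mate_set M A = {}"
    and "\<Union>CC \<subseteq> V" "\<forall>C\<in>CC. 2 \<le> card C" "pairwise disjnt CC" "\<forall>C\<in>CC. card (C \<inter> T) \<le> 1"
  shows "card (\<Union>CC) \<le> 2 * card M + card {C\<in>CC. C \<inter> T \<noteq> {} \<and> C \<inter> X \<noteq> {}}"
proof -
  have "matching M" and finVM: "finite (matched_verts M)"
    using assms(3,4) unfolding matching_on_def matched_verts_def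
    by (auto intro: finite_subset[of _ V])
  have "card (\<Union>CC) \<le> card {C\<in>CC. C \<inter> T \<noteq> {} \<and> C \<inter> X \<noteq> {}}
                        + card (\<Union>CC \<inter> X) + 2 * card (\<Union>CC - (T \<union> X))"
    using assms(7-10) finite_subset[OF assms(7,3)] by (intro card_Union_le_parts_meeting_both)
  moreover have "card (\<Union>CC \<inter> X) \<le> card X"
    using finVM unfolding X_def by (intro card_mono) auto
  moreover have "\<Union>CC - (T \<union> X) \<subseteq> mate_set M A"
    using assms(7) unfolding T_def X_def by blast
  then have "card (\<Union>CC - (T \<union> X)) \<le> card (mate_set M A)"
    using finite_subset[OF mate_set_subset_matched_verts finVM] by (intro card_mono)
  ultimately show ?thesis
    using card_matched_verts_diff_plus_twice_mates_le[OF \<open>matching M\<close> finVM assms(5,6)]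
    unfolding X_def by linarith
qed

lemma matching_across_parts:
  assumes "pairwise disjnt G" "X \<inter> T = {}" "\<forall>C\<in>G. C \<inter> X \<noteq> {} \<and> C \<inter> T \<noteq> {}"
  obtains N where "matching N" "card N = card G"
    "N \<subseteq> {{x, y} | x y. x \<noteq> y \<and> (\<exists>C\<in>G. x \<in> C \<and> y \<in> C)}"
    "\<forall>e\<in>N. \<exists>x y. e = {x, y} \<and> x \<in> X \<and> y \<in> T"
proof -
  have "\<forall>C\<in>G. \<exists>v. v \<in> C \<inter> X" "\<forall>C\<in>G. \<exists>v. v \<in> C \<inter> T"
    using assms(3) by blast+
  then obtain x t where x: "\<forall>C\<in>G. x C \<in> C \<inter> X" and t: "\<forall>C\<in>G. t C \<in> C \<inter> T"
    by (auto dest!: bchoice)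
  have x_ne_t: "x C \<noteq> t D" if "C \<in> G" "D \<in> G" for C D
  proof
    assume "x C = t D"
    then have "x C \<in> X \<inter> T"
      using x t that by auto
    then show False
      using assms(2) by simp
  qed
  have same_part: "C = D" if "C \<in> G" "D \<in> G" "v \<in> C" "v \<in> D" for C D v
    using assms(1) that unfolding pairwise_def disjnt_def by blast
  define e where "e C = {x C, t C}" for C
  have "inj_on e G"
  proof (rule inj_onI)
    fix C D assume CD: "C \<in> G" "D \<in> G" "e C = e D"
    then have "x C = x D"
      using x_ne_t unfolding e_def by (metis doubleton_eq_iff)
    then show "C = D"
      using CD(1,2) x same_part by (metis IntD1)
  qed
  then have "card (e ` G) = card G"
    by (rule card_image)
  moreover have "matching (e ` G)"
    unfolding matching_def is_edge_def
  proof (intro conjI ballI impI)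
    fix f assume "f \<in> e ` G"
    then obtain C where "C \<in> G" "f = {x C, t C}"
      unfolding e_def by blast
    then show "\<exists>a b. a \<noteq> b \<and> f = {a, b}"
      using x_ne_t by blast
  next
    fix f g assume "f \<in> e ` G" "g \<in> e ` G" "f \<noteq> g"
    then obtain C D where "C \<in> G" "D \<in> G" "C \<noteq> D" "f = e C" "g = e D"
      by blast
    moreover have "e C \<subseteq> C" "e D \<subseteq> D"
      using x t \<open>C \<in> G\<close> \<open>D \<in> G\<close> unfolding e_def by auto
    ultimately show "f \<inter> g = {}"
      using assms(1) unfolding pairwise_def disjnt_def by blast
  qed
  moreover have "e ` G \<subseteq> {{x, y} | x y. x \<noteq> y \<and> (\<exists>C\<in>G. x \<in> C \<and> y \<in> C)}"
    using x t x_ne_t unfolding e_def by blast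
  moreover have "\<forall>f\<in>e ` G. \<exists>a b. f = {a, b} \<and> a \<in> X \<and> b \<in> T"
    using x t unfolding e_def by blast
  ultimately show ?thesis
    using that by blast
qed

theorem lemma2p3:
  fixes V :: "'a set" and M :: "'a set set" and A :: "'a set" and s :: nat
    and W :: "'a set" and E :: "'a set set"
  assumes "finite V"
    and "matching_on V M"
    and "A \<subseteq> matched_verts M"
    and "A \<inter> mate_set M A = {}"
    and "W \<subseteq> V"
    and "union_of_nontrivial_cliques W E"
    and "card W \<ge> 2 * card M + s"
    and "\<forall>e\<in>E. \<not> e \<subseteq> A \<union> (V - matched_verts M)"
  shows "\<exists>N. N \<subseteq> E \<and> matching N \<and> card N = s \<and>
           (\<forall>e\<in>N. \<exists>x y. e = {x, y} \<and>
              x \<in> matched_verts M - (A \<union> mate_set M A) \<and>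
              y \<in> A \<union> (V - matched_verts M))"
proof -
  let ?T = "A \<union> (V - matched_verts M)" and ?X = "matched_verts M - (A \<union> mate_set M A)"
  obtain CC where CC: "\<forall>C\<in>CC. finite C \<and> 2 \<le> card C" "pairwise disjnt CC" "\<Union>CC = W"
    and E: "E = {{x, y} | x y. x \<noteq> y \<and> (\<exists>C\<in>CC. x \<in> C \<and> y \<in> C)}"
    using assms(6) unfolding union_of_nontrivial_cliques_def pairwise_def disjnt_def by blast
  have "\<forall>C\<in>CC. card (C \<inter> ?T) \<le> 1"
  proof (rule ballI, rule card_clique_inter_independent_le_1)
    fix C assume "C \<in> CC"
    then show "finite C" "\<forall>a\<in>C. \<forall>b\<in>C. a \<noteq> b \<longrightarrow> {a, b} \<in> E"
      using CC(1) unfolding E by blast+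
  qed (rule assms(8))
  then have "s \<le> card {C\<in>CC. C \<inter> ?T \<noteq> {} \<and> C \<inter> ?X \<noteq> {}}"
    using card_Union_le_twice_card_matching_plus_meeting_both[of V M A CC] assms(1-5,7) CC
    by auto
  then obtain G where "G \<subseteq> {C\<in>CC. C \<inter> ?T \<noteq> {} \<and> C \<inter> ?X \<noteq> {}}" "card G = s"
    by (rule obtain_subset_with_card_n)
  then have G: "G \<subseteq> CC" "card G = s" "\<forall>C\<in>G. C \<inter> ?X \<noteq> {} \<and> C \<inter> ?T \<noteq> {}"
    by auto
  have "?X \<inter> ?T = {}"
    by blast
  obtain N where N: "matching N" "card N = card G"
    "N \<subseteq> {{x, y} | x y. x \<noteq> y \<and> (\<exists>C\<in>G. x \<in> C \<and> y \<in> C)}"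
    "\<forall>e\<in>N. \<exists>x y. e = {x, y} \<and> x \<in> ?X \<and> y \<in> ?T"
    by (rule matching_across_parts[OF pairwise_subset[OF CC(2) G(1)] \<open>?X \<inter> ?T = {}\<close> G(3)])
  have "{{x, y} | x y. x \<noteq> y \<and> (\<exists>C\<in>G. x \<in> C \<and> y \<in> C)} \<subseteq> E"
    using G(1) unfolding E by blast
  with N(3) have "N \<subseteq> E"
    by (rule subset_trans)
  with N(1,2,4) G(2) show ?thesis
    by (intro exI[of _ N] conjI) simp_all
qed

end
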